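(* For any positive integer $T$, $x \in \{0,1\}^T$ and $p \in [0,1]^T$, $\mathsf{CalDist}(x,p) \le \mathsf{ECE}(x,p)$.
   Context: $\mathsf{ECE}(x,p) = \sum_{\alpha \in [0,1]} \left|\sum_{t=1}^T (x_t - p_t)\mathbf{1}[p_t = \alpha]\right|$ (only finitely many nonzero summands). For $x \in \{0,1\}^T$, let $\mathcal{C}(x) = \{q \in [0,1]^T : \sum_{t=1}^T (x_t - q_t)\mathbf{1}[q_t = \alpha] = 0 \text{ for all } \alpha \in [0,1]\}$ and $\mathsf{CalDist}(x,p) = \min_{q \in \mathcal{C}(x)} \|p-q\|_1$. *)

theory Defs
  imports "HOL-Analysis.Analysis"
begin

text \<open>Sequences of length T are modelled as functions nat => real, indexed by {1..T}.\<close>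

definition ECE :: "nat \<Rightarrow> (nat \<Rightarrow> real) \<Rightarrow> (nat \<Rightarrow> real) \<Rightarrow> real" where
  "ECE T x p = (\<Sum>\<alpha>\<in>p ` {1..T}. \<bar>\<Sum>t=1..T. (x t - p t) * (if p t = \<alpha> then 1 else 0)\<bar>)"

definition calibrated_set :: "nat \<Rightarrow> (nat \<Rightarrow> real) \<Rightarrow> (nat \<Rightarrow> real) set" where
  "calibrated_set T x = {q. (\<forall>t\<in>{1..T}. q t \<in> {0..1}) \<and>
      (\<forall>\<alpha>\<in>{0..1::real}. (\<Sum>t=1..T. (x t - q t) * (if q t = \<alpha> then 1 else 0)) = 0)}"

definition l1_dist :: "nat \<Rightarrow> (nat \<Rightarrow> real) \<Rightarrow> (nat \<Rightarrow> real) \<Rightarrow> real" where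
  "l1_dist T p q = (\<Sum>t=1..T. \<bar>p t - q t\<bar>)"

definition CalDist :: "nat \<Rightarrow> (nat \<Rightarrow> real) \<Rightarrow> (nat \<Rightarrow> real) \<Rightarrow> real" where
  "CalDist T x p = Inf (l1_dist T p ` calibrated_set T x)"

end

theory Submission
  imports Defs
begin

text \<open>Replace each forecast \<open>p t\<close> by the empirical mean of the outcomes on its level set
  \<open>{s. p s = p t}\<close>. Distinct levels may collapse to the same mean, but every level set of \<open>p\<close>
  has zero bias against its mean, so every level set of the new forecast is unbiased too. On the
  level set of \<open>\<alpha>\<close> the forecast moves by \<open>\<bar>\<alpha> - mean\<bar>\<close> at each of its \<open>n\<close> points, and \<open>n\<close> times that
  is exactly the bias \<open>\<bar>\<Sum>(x t - \<alpha>)\<bar>\<close> of this level set in the ECE.\<close>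

definition level_mean :: "'a set \<Rightarrow> ('a \<Rightarrow> real) \<Rightarrow> ('a \<Rightarrow> 'b) \<Rightarrow> 'b \<Rightarrow> real" where
  "level_mean A x p \<alpha> = (\<Sum>t\<in>{t\<in>A. p t = \<alpha>}. x t) / card {t\<in>A. p t = \<alpha>}"

definition recalibration :: "'a set \<Rightarrow> ('a \<Rightarrow> real) \<Rightarrow> ('a \<Rightarrow> 'b) \<Rightarrow> 'a \<Rightarrow> real" where
  "recalibration A x p t = level_mean A x p (p t)"

lemma sum_mult_indicator_eq_sum_filter:
  fixes f :: "'a \<Rightarrow> 'c::semiring_1"
  assumes "finite A"
  shows "(\<Sum>t\<in>A. f t * (if g t = b then 1 else 0)) = (\<Sum>t\<in>{t\<in>A. g t = b}. f t)"
  using assms by (simp add: sum.inter_filter[symmetric] if_distrib cong: if_cong)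

lemma level_mean_in_unit_interval:
  assumes "\<forall>t\<in>A. x t \<in> {0..1}"
  shows "level_mean A x p \<alpha> \<in> {0..1}"
proof -
  let ?S = "{t\<in>A. p t = \<alpha>}"
  have "0 \<le> (\<Sum>t\<in>?S. x t)" and "(\<Sum>t\<in>?S. x t) \<le> card ?S"
    using assms by (auto intro!: sum_nonneg sum_bounded_above[where K = 1, simplified])
  then show ?thesis
    unfolding level_mean_def by (cases "card ?S = 0") (auto simp: divide_le_eq)
qed

lemma card_level_set_times_level_mean:
  assumes "finite A" and "\<alpha> \<in> p ` A"
  shows "card {t\<in>A. p t = \<alpha>} * level_mean A x p \<alpha> = (\<Sum>t\<in>{t\<in>A. p t = \<alpha>}. x t)"
proof -
  have "card {t\<in>A. p t = \<alpha>} \<noteq> 0"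
    using assms by auto
  then show ?thesis
    by (simp add: level_mean_def)
qed

lemma sum_deviation_from_level_mean:
  assumes "finite A" and "\<alpha> \<in> p ` A"
  shows "(\<Sum>t\<in>{t\<in>A. p t = \<alpha>}. x t - level_mean A x p \<alpha>) = 0"
  using card_level_set_times_level_mean[OF assms, of x] by (simp add: sum_subtractf)

lemma sum_deviation_from_recalibration:
  assumes "finite A"
  shows "(\<Sum>t\<in>{t\<in>A. recalibration A x p t = \<beta>}. x t - recalibration A x p t) = 0"
proof -
  let ?q = "recalibration A x p" and ?B = "{t\<in>A. recalibration A x p t = \<beta>}"
  have "(\<Sum>t\<in>?B. x t - ?q t) = (\<Sum>\<alpha>\<in>p ` ?B. \<Sum>t\<in>{t\<in>?B. p t = \<alpha>}. x t - ?q t)"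
    by (rule sum.group[symmetric]) (use assms in auto)
  also have "\<dots> = (\<Sum>\<alpha>\<in>p ` ?B. \<Sum>t\<in>{t\<in>A. p t = \<alpha>}. x t - level_mean A x p \<alpha>)"
  proof (rule sum.cong[OF refl])
    fix \<alpha> assume "\<alpha> \<in> p ` ?B"
    then have "{t\<in>?B. p t = \<alpha>} = {t\<in>A. p t = \<alpha>}"
      by (auto simp: recalibration_def)
    then show "(\<Sum>t\<in>{t\<in>?B. p t = \<alpha>}. x t - ?q t) = (\<Sum>t\<in>{t\<in>A. p t = \<alpha>}. x t - level_mean A x p \<alpha>)"
      by (simp add: recalibration_def)
  qed
  also have "\<dots> = 0"
    by (rule sum.neutral) (auto intro: sum_deviation_from_level_mean[OF assms])
  finally show ?thesis .
qed

lemma sum_abs_diff_recalibration: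
  fixes p :: "'a \<Rightarrow> real"
  assumes "finite A"
  shows "(\<Sum>t\<in>A. \<bar>p t - recalibration A x p t\<bar>) = (\<Sum>\<alpha>\<in>p ` A. \<bar>\<Sum>t\<in>{t\<in>A. p t = \<alpha>}. x t - p t\<bar>)"
proof -
  have "(\<Sum>t\<in>A. \<bar>p t - recalibration A x p t\<bar>)
      = (\<Sum>\<alpha>\<in>p ` A. \<Sum>t\<in>{t\<in>A. p t = \<alpha>}. \<bar>p t - recalibration A x p t\<bar>)"
    by (rule sum.group[symmetric]) (use assms in auto)
  also have "\<dots> = (\<Sum>\<alpha>\<in>p ` A. \<bar>\<Sum>t\<in>{t\<in>A. p t = \<alpha>}. x t - p t\<bar>)"
  proof (rule sum.cong[OF refl])
    fix \<alpha> assume \<alpha>: "\<alpha> \<in> p ` A"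
    let ?S = "{t\<in>A. p t = \<alpha>}"
    have "(\<Sum>t\<in>?S. \<bar>p t - recalibration A x p t\<bar>) = \<bar>card ?S * (\<alpha> - level_mean A x p \<alpha>)\<bar>"
      by (simp add: recalibration_def abs_mult)
    also have "card ?S * (\<alpha> - level_mean A x p \<alpha>) = - (\<Sum>t\<in>?S. x t - p t)"
      using card_level_set_times_level_mean[OF assms \<alpha>, of x]
      by (simp add: sum_subtractf algebra_simps)
    finally show "(\<Sum>t\<in>?S. \<bar>p t - recalibration A x p t\<bar>) = \<bar>\<Sum>t\<in>?S. x t - p t\<bar>"
      by simp
  qed
  finally show ?thesis .
qed

lemma recalibration_in_calibrated_set:
  assumes "\<forall>t\<in>{1..T}. x t \<in> {0..1}"
  shows "recalibration {1..T} x p \<in> calibrated_set T x"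
  unfolding calibrated_set_def
proof (intro CollectI conjI ballI)
  fix t
  show "recalibration {1..T} x p t \<in> {0..1}"
    unfolding recalibration_def by (rule level_mean_in_unit_interval[OF assms])
next
  fix \<beta> :: real
  show "(\<Sum>t=1..T. (x t - recalibration {1..T} x p t)
      * (if recalibration {1..T} x p t = \<beta> then 1 else 0)) = 0"
    by (simp only: sum_mult_indicator_eq_sum_filter[OF finite_atLeastAtMost]
        sum_deviation_from_recalibration[OF finite_atLeastAtMost])
qed

lemma l1_dist_recalibration_eq_ECE:
  "l1_dist T p (recalibration {1..T} x p) = ECE T x p"
  by (simp add: l1_dist_def ECE_def sum_abs_diff_recalibration sum_mult_indicator_eq_sum_filter
      cong: sum.cong)

lemma CalDist_le_l1_dist:
  assumes "q \<in> calibrated_set T x"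
  shows "CalDist T x p \<le> l1_dist T p q"
proof -
  have "bdd_below (l1_dist T p ` calibrated_set T x)"
    by (rule bdd_belowI[of _ 0]) (auto simp: l1_dist_def intro: sum_nonneg)
  then show ?thesis
    unfolding CalDist_def using assms by (auto intro: cInf_lower)
qed

theorem proposition3:
  fixes T :: nat and x p :: "nat \<Rightarrow> real"
  assumes "T \<ge> 1"
    and "\<forall>t\<in>{1..T}. x t \<in> {0, 1}"
    and "\<forall>t\<in>{1..T}. p t \<in> {0..1}"
  shows "CalDist T x p \<le> ECE T x p"
proof -
  \<comment> \<open>Only \<open>x t \<in> {0..1}\<close> is used.\<close>
  have "\<forall>t\<in>{1..T}. x t \<in> {0..1}"
    using assms(2) by auto
  then have "CalDist T x p \<le> l1_dist T p (recalibration {1..T} x p)"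
    by (intro CalDist_le_l1_dist recalibration_in_calibrated_set)
  then show ?thesis
    unfolding l1_dist_recalibration_eq_ECE .
qed

end
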